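(* Let $v \in \mathbb{R}^n$ and let $G=(V,E)$ be a $p$-regular multigraph with $|V|=a$ and $|E|=b$. Then \[ \kappa_G(v^{\otimes p}) = \frac{n^{\underline{b}}}{(n+2b-2)(n+2b-4)\cdots(n+2)\,n}\,\|v\|^{2b}, \] where $n^{\underline{b}} = n!/(n-b)! = n(n-1)\cdots(n-b+1)$ is the falling factorial and the denominator is the falling double factorial $(n+2b-2)!!/(n-2)!! = \prod_{j=0}^{b-1}(n+2j)$.
   Context: For a symmetric $p$-ary tensor $T$ and an orthogonal (or general) matrix $Q$, $Q\cdot T$ denotes the change of basis $(Q\cdot T)_{j_1,\ldots,j_p}=\sum_{i_1,\ldots,i_p} T_{i_1,\ldots,i_p}\prod_{t=1}^p Q_{i_t,j_t}$. For a $p$-regular multigraph $G=(V,E)$ with $b$ edges, the distinct-index graph moment is $m^!_G(T)=\sum_{i\in[n]^E,\ i_1,\ldots,i_b \text{ distinct}} \prod_{v\in V} T_{i(\partial v)}$, where $i(\partial v)$ is the multiset of indices on the edges incident to $v$. The (finite) free cumulant of $T$ is $\kappa_G(T)=\mathbb{E}_Q[m^!_G(Q\cdot T)]$ with $Q$ Haar-random in $\mathcal{O}(n)$ ($\kappa_\emptyset=1$). $v^{\otimes p}$ is the rank-one tensor with entries $v_{i_1}\cdots v_{i_p}$. *)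

theory Defs
  imports "HOL-Analysis.Analysis" "HOL-Probability.Probability"
begin

text \<open>Tensors of order p over R^n (index type 'n, n = CARD('n)) are functions from
 index lists (of length p) to reals.\<close>
type_synonym 'n tensor = "'n list \<Rightarrow> real"

definition change_basis :: "nat \<Rightarrow> real^'n^'n \<Rightarrow> ('n::finite) tensor \<Rightarrow> 'n tensor" where
  "change_basis p Q T = (\<lambda>js. \<Sum>is\<in>{is::'n list. length is = p}.
      T is * (\<Prod>t<p. Q $ (is ! t) $ (js ! t)))"

definition rank_one :: "real^'n \<Rightarrow> 'n tensor" where
  "rank_one v = (\<lambda>is. prod_list (map (\<lambda>i. v $ i) is))"

text \<open>Evaluating a symmetric tensor at a multiset of indices.\<close>
definition tensor_at :: "'n tensor \<Rightarrow> 'n multiset \<Rightarrow> real" where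
  "tensor_at T M = T (SOME xs. mset xs = M)"

text \<open>A multigraph on vertices {0..<a} is a list E of edges (pairs of endpoints);
 edge e (e < length E) joins fst (E!e) and snd (E!e); loops allowed.\<close>
definition incid :: "(nat \<times> nat) list \<Rightarrow> nat \<Rightarrow> nat multiset" where
  "incid E v = (\<Sum>e<length E. (if fst (E!e) = v then {#e#} else {#}) +
                              (if snd (E!e) = v then {#e#} else {#}))"

definition p_regular_multigraph :: "nat \<Rightarrow> nat \<Rightarrow> (nat \<times> nat) list \<Rightarrow> bool" where
  "p_regular_multigraph p a E \<longleftrightarrow>
     (\<forall>e\<in>set E. fst e < a \<and> snd e < a) \<and> (\<forall>v<a. size (incid E v) = p)"

definition graph_moment_distinct :: "nat \<Rightarrow> (nat \<times> nat) list \<Rightarrow> ('n::finite) tensor \<Rightarrow> real" where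
  "graph_moment_distinct a E T =
     (\<Sum>i\<in>{i \<in> {0..<length E} \<rightarrow>\<^sub>E (UNIV::'n set). inj_on i {0..<length E}}.
        \<Prod>v<a. tensor_at T (image_mset i (incid E v)))"

text \<open>Haar probability measure on O(n): a probability measure on n x n real matrices,
 concentrated on the orthogonal matrices and invariant under left multiplication by
 orthogonal matrices (unique by uniqueness of Haar measure on the compact group O(n)).\<close>
definition haar_orthogonal :: "(real^'n^'n) measure \<Rightarrow> bool" where
  "haar_orthogonal \<mu> \<longleftrightarrow> prob_space \<mu> \<and> sets \<mu> = sets borel \<and>
     (AE Q in \<mu>. orthogonal_matrix Q) \<and>
     (\<forall>U. orthogonal_matrix U \<longrightarrow> distr \<mu> borel (\<lambda>Q. U ** Q) = \<mu>)"

definition free_cumulant :: "(real^'n^'n) measure \<Rightarrow> nat \<Rightarrow> nat \<Rightarrow> (nat \<times> nat) list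
     \<Rightarrow> ('n::finite) tensor \<Rightarrow> real" where
  "free_cumulant \<mu> p a E T = (\<integral>Q. graph_moment_distinct a E (change_basis p Q T) \<partial>\<mu>)"

end

(*
  For a rank-one tensor, Q . v^{(x) p} is the rank-one tensor of w = v Q, and p-regularity turns the
  distinct-index moment into b! e_b(w_1^2, ..., w_n^2), where e_b is the elementary symmetric function.
  Its Haar expectation m_b(v) is invariant under rotations of v, so m_b(v) = |v|^{2b} m_b(u) for any
  unit vector u.  Applying the Laplacian in v to both sides at v = u gives the recurrence
  (b+1)(n+2b) m_{b+1}(u) = (n-b) m_b(u): since the rows of Q are orthonormal, the Laplacian of
  e_{b+1}(w^2) is 2(n-b) e_b(w^2), while that of |v|^{2(b+1)} at a unit vector is 2(b+1)(n+2b).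
  Second derivatives are taken as t^2-coefficients of polynomials along the lines u + t e_j; by
  Lagrange interpolation such a coefficient is a fixed linear combination of values, so it commutes
  with the expectation.
*)
theory Submission
  imports Defs "HOL-Computational_Algebra.Polynomial"
begin

section \<open>Elementary symmetric functions and injections\<close>

definition elem_sym :: "nat \<Rightarrow> ('a::finite \<Rightarrow> real) \<Rightarrow> real" where
  "elem_sym b f = (\<Sum>A | card A = b. \<Prod>i\<in>A. f i)"

definition injections :: "nat \<Rightarrow> (nat \<Rightarrow> 'a) set" where
  "injections b = {i \<in> {0..<b} \<rightarrow>\<^sub>E UNIV. inj_on i {0..<b}}"

lemma Collect_card_eq_0: "{A :: 'a::finite set. card A = 0} = {{}}"
  by auto

lemma elem_sym_0 [simp]: "elem_sym 0 f = 1"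
  by (simp add: elem_sym_def Collect_card_eq_0)

lemma finite_injections: "finite (injections b :: (nat \<Rightarrow> 'a::finite) set)"
  unfolding injections_def by (rule finite_subset[of _ "{0..<b} \<rightarrow>\<^sub>E UNIV"]) (auto intro: finite_PiE)

lemma sum_card_compl_eq_sum_card_Suc:
  fixes F :: "'a::finite set \<Rightarrow> 'a \<Rightarrow> 'b::comm_monoid_add"
  shows "(\<Sum>B | card B = b. \<Sum>x\<in>-B. F B x) = (\<Sum>A | card A = Suc b. \<Sum>x\<in>A. F (A - {x}) x)"
proof -
  have "(\<Sum>B | card B = b. \<Sum>x\<in>-B. F B x) = (\<Sum>(B, x) \<in> Sigma {B. card B = b} uminus. F B x)"
    by (rule sum.Sigma) auto
  also have "\<dots> = (\<Sum>(A, x) \<in> Sigma {A. card A = Suc b} (\<lambda>A. A). F (A - {x}) x)"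
    by (rule sum.reindex_bij_witness[where i = "\<lambda>(A, x). (A - {x}, x)"
          and j = "\<lambda>(B, x). (insert x B, x)"])
       (auto simp: card_insert_if)
  also have "\<dots> = (\<Sum>A | card A = Suc b. \<Sum>x\<in>A. F (A - {x}) x)"
    by (rule sum.Sigma[symmetric]) auto
  finally show ?thesis .
qed

lemma sum_injections_Suc:
  fixes g :: "(nat \<Rightarrow> 'a::finite) \<Rightarrow> 'b::comm_monoid_add"
  shows "(\<Sum>f\<in>injections (Suc b). g f) =
     (\<Sum>i\<in>injections b. \<Sum>x\<in>-(i ` {0..<b}). g (i(b := x)))"
proof -
  let ?S = "Sigma (injections b) (\<lambda>i. -(i ` {0..<b}))"
  have "(\<Sum>(i, x) \<in> ?S. g (i(b := x))) = (\<Sum>f\<in>injections (Suc b). g f)"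
  proof (rule sum.reindex_bij_witness[where i = "\<lambda>f. (f(b := undefined), f b)"
        and j = "\<lambda>(i, x). i(b := x)"])
    fix ix :: "(nat \<Rightarrow> 'a) \<times> 'a" assume ix: "ix \<in> ?S"
    obtain i x where ix_eq: "ix = (i, x)" by (cases ix)
    with ix have i: "i \<in> {0..<b} \<rightarrow>\<^sub>E UNIV" "inj_on i {0..<b}" "x \<notin> i ` {0..<b}"
      by (auto simp: injections_def)
    then have "i b = undefined" by (auto simp: PiE_def extensional_def)
    then show "(\<lambda>f. (f(b := undefined), f b)) (case ix of (i, x) \<Rightarrow> i(b := x)) = ix"
      using ix_eq by auto
    show "(case ix of (i, x) \<Rightarrow> i(b := x)) \<in> injections (Suc b)"
      using i ix_eq unfolding injections_def
      by (auto simp: PiE_def extensional_def atLeast0_lessThan_Suc inj_on_def)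
    show "g (case ix of (i, x) \<Rightarrow> i(b := x)) = (case ix of (i, x) \<Rightarrow> g (i(b := x)))"
      using ix_eq by simp
  next
    fix f :: "nat \<Rightarrow> 'a" assume "f \<in> injections (Suc b)"
    then have f: "f \<in> {0..<Suc b} \<rightarrow>\<^sub>E UNIV" "inj_on f {0..<Suc b}"
      by (auto simp: injections_def)
    show "(case (f(b := undefined), f b) of (i, x) \<Rightarrow> i(b := x)) = f" by simp
    have "f b \<notin> f ` {0..<b}"
      by (subst inj_on_image_mem_iff[OF f(2)]) auto
    moreover have "(f(b := undefined)) ` {0..<b} = f ` {0..<b}"
      by auto
    moreover have "f(b := undefined) \<in> {0..<b} \<rightarrow>\<^sub>E UNIV" "inj_on (f(b := undefined)) {0..<b}"
      using f by (auto simp: PiE_def extensional_def inj_on_def)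
    ultimately show "(f(b := undefined), f b) \<in> ?S"
      by (auto simp: injections_def)
  qed
  then show ?thesis
    by (simp add: sum.Sigma finite_injections)
qed

lemma sum_injections_image:
  fixes H :: "'a::finite set \<Rightarrow> 'b::{comm_semiring_1, semiring_char_0}"
  shows "(\<Sum>i\<in>injections b. H (i ` {0..<b})) = fact b * (\<Sum>A | card A = b. H A)"
proof (induction b arbitrary: H)
  case 0
  then show ?case by (simp add: injections_def Collect_card_eq_0)
next
  case (Suc b)
  have "(\<Sum>i\<in>injections (Suc b). H (i ` {0..<Suc b})) =
      (\<Sum>i\<in>injections b. \<Sum>x\<in>-(i ` {0..<b}). H (insert x (i ` {0..<b})))"
    by (simp add: sum_injections_Suc atLeast0_lessThan_Suc fun_upd_image)
  also have "\<dots> = fact b * (\<Sum>B | card B = b. \<Sum>x\<in>-B. H (insert x B))"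
    by (rule Suc.IH)
  also have "\<dots> = fact b * (\<Sum>A | card A = Suc b. \<Sum>x\<in>A. H (insert x (A - {x})))"
    by (simp add: sum_card_compl_eq_sum_card_Suc)
  also have "\<dots> = fact b * (\<Sum>A | card A = Suc b. of_nat (Suc b) * H A)"
    by (intro arg_cong[where f = "\<lambda>y. fact b * y"] sum.cong refl) (simp add: insert_absorb)
  also have "\<dots> = fact (Suc b) * (\<Sum>A | card A = Suc b. H A)"
    by (simp add: sum_distrib_left mult.assoc[symmetric] mult.commute[of "fact b"])
  finally show ?case .
qed

lemma sum_injections_prod:
  "(\<Sum>i\<in>injections b. \<Prod>e<b. f (i e)) = fact b * elem_sym b (f :: 'a::finite \<Rightarrow> real)"
proof -
  have "(\<Prod>e<b. f (i e)) = (\<Prod>x\<in>i ` {0..<b}. f x)" if "i \<in> injections b" for i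
    using that by (simp add: injections_def prod.reindex lessThan_atLeast0)
  then show ?thesis
    by (simp add: sum_injections_image elem_sym_def)
qed

section \<open>Graph moments of rank-one tensors\<close>

lemma sum_lists_length_prod:
  fixes f :: "nat \<Rightarrow> 'a::finite \<Rightarrow> 'b::comm_semiring_1"
  shows "(\<Sum>is | length is = p. \<Prod>t<p. f t (is ! t)) = (\<Prod>t<p. \<Sum>i\<in>UNIV. f t i)"
proof (induction p arbitrary: f)
  case 0
  then show ?case by simp
next
  case (Suc p)
  have lists: "{is::'a list. length is = Suc p} = (\<lambda>(x, xs). x # xs) ` (UNIV \<times> {xs. length xs = p})"
    by (auto simp: length_Suc_conv)
  have inj: "inj_on (\<lambda>(x, xs). x # xs) (UNIV \<times> {xs::'a list. length xs = p})"
    by (auto simp: inj_on_def)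
  have "(\<Sum>is | length is = Suc p. \<Prod>t<Suc p. f t (is ! t))
      = (\<Sum>(x, xs) \<in> UNIV \<times> {xs. length xs = p}. f 0 x * (\<Prod>t<p. f (Suc t) (xs ! t)))"
    unfolding lists sum.reindex[OF inj]
    by (simp add: case_prod_beta prod.lessThan_Suc_shift del: prod.lessThan_Suc)
  also have "\<dots> = (\<Sum>x\<in>UNIV. f 0 x * (\<Sum>xs | length xs = p. \<Prod>t<p. f (Suc t) (xs ! t)))"
    by (simp add: sum.cartesian_product[symmetric] sum_distrib_left)
  also have "\<dots> = (\<Sum>x\<in>UNIV. f 0 x) * (\<Prod>t<p. \<Sum>i\<in>UNIV. f (Suc t) i)"
    by (simp add: Suc.IH[of "\<lambda>t. f (Suc t)"] sum_distrib_right)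
  also have "\<dots> = (\<Prod>t<Suc p. \<Sum>i\<in>UNIV. f t i)"
    by (simp add: prod.lessThan_Suc_shift del: prod.lessThan_Suc)
  finally show ?case .
qed

lemma change_basis_rank_one:
  assumes "length js = p"
  shows "change_basis p Q (rank_one v) js = (\<Prod>t<p. (v v* Q) $ (js ! t))"
proof -
  have "change_basis p Q (rank_one v) js =
      (\<Sum>is | length is = p. \<Prod>t<p. v $ (is ! t) * Q $ (is ! t) $ (js ! t))"
    unfolding change_basis_def rank_one_def
    by (intro sum.cong refl) (simp add: prod.list_conv_set_nth prod.distrib atLeast0LessThan)
  also have "\<dots> = (\<Prod>t<p. (v v* Q) $ (js ! t))"
    by (subst sum_lists_length_prod) (simp add: vector_matrix_mult_def)
  finally show ?thesis .
qed

lemma tensor_at_change_basis_rank_one: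
  assumes "size M = p"
  shows "tensor_at (change_basis p Q (rank_one v)) M = (\<Prod>\<^sub># (image_mset (\<lambda>i. (v v* Q) $ i) M))"
proof -
  define xs where "xs = (SOME xs. mset xs = M)"
  have xs: "mset xs = M"
    unfolding xs_def by (rule someI_ex) (rule ex_mset)
  then have "length xs = p"
    using assms by (metis size_mset)
  then have "tensor_at (change_basis p Q (rank_one v)) M = prod_list (map (\<lambda>i. (v v* Q) $ i) xs)"
    by (simp add: tensor_at_def flip: xs_def add: change_basis_rank_one prod.list_conv_set_nth atLeast0LessThan)
  also have "\<dots> = (\<Prod>\<^sub># (image_mset (\<lambda>i. (v v* Q) $ i) M))"
    by (simp flip: xs prod_mset_prod_list)
  finally show ?thesis .
qed

lemma prod_mset_image_mset_sum:
  "finite A \<Longrightarrow> (\<Prod>\<^sub># (image_mset g (\<Sum>e\<in>A. M e))) = (\<Prod>e\<in>A. \<Prod>\<^sub># (image_mset g (M e)))"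
  by (induction A rule: finite_induct) auto

lemma prod_incid_eq_prod_power2:
  fixes g :: "nat \<Rightarrow> 'a::comm_monoid_mult"
  assumes "\<forall>e\<in>set E. fst e < a \<and> snd e < a"
  shows "(\<Prod>u<a. \<Prod>\<^sub># (image_mset g (incid E u))) = (\<Prod>e<length E. g e ^ 2)"
proof -
  have "(\<Prod>u<a. \<Prod>\<^sub># (image_mset g (incid E u))) =
      (\<Prod>u<a. \<Prod>e<length E. (if fst (E ! e) = u then g e else 1) * (if snd (E ! e) = u then g e else 1))"
    by (simp add: incid_def prod_mset_image_mset_sum if_distrib[of "image_mset g"]
        if_distrib[of prod_mset] cong: if_cong)
  also have "\<dots> = (\<Prod>e<length E. \<Prod>u<a. (if fst (E ! e) = u then g e else 1) * (if snd (E ! e) = u then g e else 1))"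
    by (rule prod.swap)
  also have "\<dots> = (\<Prod>e<length E. g e ^ 2)"
  proof (intro prod.cong refl)
    fix e assume "e \<in> {..<length E}"
    then have "fst (E ! e) < a" "snd (E ! e) < a"
      using assms nth_mem by auto
    then show "(\<Prod>u<a. (if fst (E ! e) = u then g e else 1) * (if snd (E ! e) = u then g e else 1)) = g e ^ 2"
      by (simp add: prod.distrib power2_eq_square)
  qed
  finally show ?thesis .
qed

lemma graph_moment_distinct_rank_one:
  fixes Q :: "real^'n::finite^'n"
  assumes "p_regular_multigraph p a E"
  shows "graph_moment_distinct a E (change_basis p Q (rank_one v)) =
    fact (length E) * elem_sym (length E) (\<lambda>i. ((v v* Q) $ i) ^ 2)"
proof -
  have ends: "\<forall>e\<in>set E. fst e < a \<and> snd e < a"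
    and deg: "\<And>u. u < a \<Longrightarrow> size (incid E u) = p"
    using assms unfolding p_regular_multigraph_def by auto
  have "(\<Prod>u<a. tensor_at (change_basis p Q (rank_one v)) (image_mset i (incid E u))) =
      (\<Prod>e<length E. ((v v* Q) $ i e) ^ 2)" for i :: "nat \<Rightarrow> 'n"
    using prod_incid_eq_prod_power2[OF ends, of "\<lambda>e. (v v* Q) $ i e"]
    by (simp add: tensor_at_change_basis_rank_one deg multiset.map_comp o_def)
  then show ?thesis
    using sum_injections_prod[where f = "\<lambda>j. ((v v* Q) $ j) ^ 2"]
    by (simp add: graph_moment_distinct_def flip: injections_def)
qed

section \<open>Polynomials along lines\<close>

lemma poly_eqI_values_upto:
  fixes p q :: "real poly"
  assumes "degree p \<le> N" "degree q \<le> N"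
    and "\<And>k. k \<le> N \<Longrightarrow> poly p (real k) = poly q (real k)"
  shows "p = q"
proof (rule ccontr)
  assume "p \<noteq> q"
  then have nz: "p - q \<noteq> 0" by simp
  have "real ` {..N} \<subseteq> {x. poly (p - q) x = 0}"
    using assms(3) by auto
  then have "card (real ` {..N}) \<le> card {x. poly (p - q) x = 0}"
    by (intro card_mono poly_roots_finite nz)
  then have "Suc N \<le> card {x. poly (p - q) x = 0}"
    by (simp add: card_image)
  also have "\<dots> \<le> degree (p - q)"
    by (rule card_poly_roots_bound[OF nz])
  also have "\<dots> \<le> N"
    using assms(1,2) by (meson degree_diff_le)
  finally show False by simp
qed

lemma coeff_eq_sum_values_upto:
  obtains w :: "nat \<Rightarrow> real"
  where "\<And>p. degree p \<le> N \<Longrightarrow> coeff p m = (\<Sum>k\<le>N. w k * poly p (real k))"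
proof
  define L where "L k = smult (1 / (\<Prod>l\<in>{..N}-{k}. real k - real l)) (\<Prod>l\<in>{..N}-{k}. [:- real l, 1:])" for k
  have L_node: "poly (L k) (real i) = (if i = k then 1 else 0)" if "i \<le> N" for i k
    using that by (auto simp: L_def poly_prod prod_zero_iff)
  have degree_L: "degree (L k) \<le> N" if "k \<le> N" for k
  proof -
    have "degree (L k) \<le> sum (degree \<circ> (\<lambda>l. [:- real l, 1:])) ({..N}-{k})"
      unfolding L_def by (intro order.trans[OF degree_smult_le] degree_prod_sum_le) simp
    also have "\<dots> = N"
      using that by (simp add: card_Diff_singleton)
    finally show ?thesis .
  qed
  fix p :: "real poly"
  assume "degree p \<le> N"
  moreover have "degree (\<Sum>k\<le>N. smult (poly p (real k)) (L k)) \<le> N"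
    by (intro degree_sum_le) (auto intro: order.trans[OF degree_smult_le] degree_L)
  moreover have "poly (\<Sum>k\<le>N. smult (poly p (real k)) (L k)) (real i) = poly p (real i)" if "i \<le> N" for i
    using that by (simp add: poly_sum L_node if_distrib cong: if_cong)
  ultimately have "p = (\<Sum>k\<le>N. smult (poly p (real k)) (L k))"
    by (intro poly_eqI_values_upto) auto
  then show "coeff p m = (\<Sum>k\<le>N. coeff (L k) m * poly p (real k))"
    by (metis (no_types, lifting) coeff_smult coeff_sum mult.commute sum.cong)
qed

lemma has_bochner_integral_coeff:
  fixes P :: "'a \<Rightarrow> real poly"
  assumes "\<And>x. degree (P x) \<le> N" "degree p \<le> N"
    and "\<And>t. has_bochner_integral M (\<lambda>x. poly (P x) t) (poly p t)"
  shows "has_bochner_integral M (\<lambda>x. coeff (P x) m) (coeff p m)"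
proof -
  obtain w where w: "\<And>q. degree q \<le> N \<Longrightarrow> coeff q m = (\<Sum>k\<le>N. w k * poly q (real k))"
    using coeff_eq_sum_values_upto by blast
  have "has_bochner_integral M (\<lambda>x. \<Sum>k\<le>N. w k * poly (P x) (real k)) (\<Sum>k\<le>N. w k * poly p (real k))"
    by (intro has_bochner_integral_sum has_bochner_integral_mult_right assms(3))
  then show ?thesis
    by (simp add: w assms(1,2))
qed

lemma coeff_mult_1_2:
  fixes p q :: "'a::comm_semiring_1 poly"
  shows "coeff (p * q) 1 = coeff p 0 * coeff q 1 + coeff p 1 * coeff q 0"
    and "coeff (p * q) 2 = coeff p 0 * coeff q 2 + coeff p 1 * coeff q 1 + coeff p 2 * coeff q 0"
  by (simp_all add: coeff_mult numeral_2_eq_2)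

definition prod_sq_line_poly :: "('a \<Rightarrow> real) \<Rightarrow> ('a \<Rightarrow> real) \<Rightarrow> 'a set \<Rightarrow> real poly" where
  "prod_sq_line_poly x d A = (\<Prod>i\<in>A. [:x i, d i:] ^ 2)"

lemma poly_prod_sq_line_poly:
  "poly (prod_sq_line_poly x d A) t = (\<Prod>i\<in>A. (x i + t * d i) ^ 2)"
  by (simp add: prod_sq_line_poly_def poly_prod)

lemma degree_prod_sq_line_poly:
  assumes "finite A"
  shows "degree (prod_sq_line_poly x d A) \<le> 2 * card A"
proof -
  have "degree (prod_sq_line_poly x d A) \<le> sum (degree \<circ> (\<lambda>i. [:x i, d i:] ^ 2)) A"
    unfolding prod_sq_line_poly_def by (rule degree_prod_sum_le[OF assms])
  also have "\<dots> \<le> (\<Sum>i\<in>A. 2)"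
  proof (rule sum_mono)
    fix i
    show "(degree \<circ> (\<lambda>i. [:x i, d i:] ^ 2)) i \<le> 2"
      using degree_power_le[of "[:x i, d i:]" 2] degree_pCons_le[of "x i" "[:d i:]"] by simp
  qed
  finally show ?thesis by simp
qed

lemma prod_sq_line_poly_insert:
  "finite A \<Longrightarrow> i \<notin> A \<Longrightarrow>
    prod_sq_line_poly x d (insert i A) = [:x i ^ 2, 2 * x i * d i, d i ^ 2:] * prod_sq_line_poly x d A"
  by (simp add: prod_sq_line_poly_def power2_eq_square algebra_simps)

lemma coeff_0_prod_sq_line_poly:
  "finite A \<Longrightarrow> coeff (prod_sq_line_poly x d A) 0 = (\<Prod>i\<in>A. x i ^ 2)"
  by (induction A rule: finite_induct) (simp_all add: prod_sq_line_poly_insert coeff_mult_0,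
      simp add: prod_sq_line_poly_def)

lemma sum_prod_remove_insert:
  fixes f g :: "'a \<Rightarrow> 'b::comm_semiring_1"
  assumes "finite A" "m \<notin> A"
  shows "(\<Sum>i\<in>insert m A. g i * (\<Prod>l\<in>insert m A - {i}. f l)) =
    f m * (\<Sum>i\<in>A. g i * (\<Prod>l\<in>A - {i}. f l)) + g m * (\<Prod>l\<in>A. f l)"
proof -
  have "(\<Prod>l\<in>insert m A - {i}. f l) = f m * (\<Prod>l\<in>A - {i}. f l)" if "i \<in> A" for i
  proof -
    have "insert m A - {i} = insert m (A - {i})"
      using that assms(2) by auto
    then show ?thesis
      using assms by simp
  qed
  moreover have "insert m A - {m} = A"
    using assms(2) by auto
  ultimately show ?thesis
    using assms by (simp add: sum_distrib_left mult_ac add.commute)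
qed

lemma coeff_1_prod_sq_line_poly:
  "finite A \<Longrightarrow> coeff (prod_sq_line_poly x d A) 1 = (\<Sum>i\<in>A. 2 * x i * d i * (\<Prod>l\<in>A - {i}. x l ^ 2))"
proof (induction A rule: finite_induct)
  case empty
  then show ?case by (simp add: prod_sq_line_poly_def)
next
  case (insert m A)
  then show ?case
    by (subst sum_prod_remove_insert[OF insert.hyps])
      (simp add: prod_sq_line_poly_insert coeff_mult_1_2 coeff_0_prod_sq_line_poly)
qed

lemma sum_coeff_2_prod_sq_line_poly_orthonormal:
  fixes d :: "'j \<Rightarrow> 'a \<Rightarrow> real"
  assumes "finite A" "finite J"
    and orthonormal: "\<And>i l. (\<Sum>j\<in>J. d j i * d j l) = (if i = l then 1 else 0)"
  shows "(\<Sum>j\<in>J. coeff (prod_sq_line_poly x (d j) A) 2) = (\<Sum>i\<in>A. \<Prod>l\<in>A - {i}. x l ^ 2)"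
  using assms(1)
proof (induction A rule: finite_induct)
  case empty
  then show ?case by (simp add: prod_sq_line_poly_def)
next
  case (insert m A)
  have cross: "(\<Sum>j\<in>J. d j m * coeff (prod_sq_line_poly x (d j) A) 1) = 0"
  proof -
    have "(\<Sum>j\<in>J. d j m * coeff (prod_sq_line_poly x (d j) A) 1) =
        (\<Sum>i\<in>A. 2 * x i * (\<Prod>l\<in>A - {i}. x l ^ 2) * (\<Sum>j\<in>J. d j i * d j m))"
      unfolding coeff_1_prod_sq_line_poly[OF insert.hyps(1)]
      by (simp add: sum_distrib_left sum_distrib_right mult_ac sum.swap[of _ J])
    also have "\<dots> = 0"
      using insert.hyps by (intro sum.neutral) (auto simp: orthonormal)
    finally show ?thesis .
  qed
  have "(\<Sum>j\<in>J. coeff (prod_sq_line_poly x (d j) (insert m A)) 2) =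
      x m ^ 2 * (\<Sum>j\<in>J. coeff (prod_sq_line_poly x (d j) A) 2)
      + 2 * x m * (\<Sum>j\<in>J. d j m * coeff (prod_sq_line_poly x (d j) A) 1)
      + (\<Sum>j\<in>J. d j m * d j m) * (\<Prod>l\<in>A. x l ^ 2)"
    unfolding prod_sq_line_poly_insert[OF insert.hyps] coeff_mult_1_2
    by (simp add: numeral_2_eq_2 coeff_0_prod_sq_line_poly insert.hyps sum.distrib
        sum_distrib_left sum_distrib_right mult_ac power2_eq_square)
  also have "\<dots> = x m ^ 2 * (\<Sum>i\<in>A. \<Prod>l\<in>A - {i}. x l ^ 2) + (\<Prod>l\<in>A. x l ^ 2)"
    unfolding insert.IH cross by (simp add: orthonormal)
  also have "\<dots> = (\<Sum>i\<in>insert m A. \<Prod>l\<in>insert m A - {i}. x l ^ 2)"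
    using sum_prod_remove_insert[OF insert.hyps, of "\<lambda>_. 1" "\<lambda>l. x l ^ 2"] by simp
  finally show ?case .
qed

definition elem_sym_sq_line_poly :: "nat \<Rightarrow> ('a::finite \<Rightarrow> real) \<Rightarrow> ('a \<Rightarrow> real) \<Rightarrow> real poly" where
  "elem_sym_sq_line_poly b x d = (\<Sum>A | card A = b. prod_sq_line_poly x d A)"

lemma poly_elem_sym_sq_line_poly:
  "poly (elem_sym_sq_line_poly b x d) t = elem_sym b (\<lambda>i. (x i + t * d i) ^ 2)"
  by (simp add: elem_sym_sq_line_poly_def elem_sym_def poly_sum poly_prod_sq_line_poly)

lemma degree_elem_sym_sq_line_poly: "degree (elem_sym_sq_line_poly b x d) \<le> 2 * b"
  unfolding elem_sym_sq_line_poly_def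
  by (intro degree_sum_le) (auto intro: order.trans[OF degree_prod_sq_line_poly])

text \<open>Up to the factor 2, the left-hand side is the Laplacian at \<open>x\<close> of the
  polynomial \<open>y \<mapsto> elem_sym (Suc c) (\<lambda>i. y i ^ 2)\<close>, computed in the orthonormal frame \<open>d\<close>.\<close>
lemma sum_coeff_2_elem_sym_sq_line_poly_orthonormal:
  fixes x :: "'a::finite \<Rightarrow> real" and d :: "'j \<Rightarrow> 'a \<Rightarrow> real"
  assumes "finite J"
    and orthonormal: "\<And>i l. (\<Sum>j\<in>J. d j i * d j l) = (if i = l then 1 else 0)"
  shows "(\<Sum>j\<in>J. coeff (elem_sym_sq_line_poly (Suc c) x (d j)) 2) =
    (real CARD('a) - real c) * elem_sym c (\<lambda>i. x i ^ 2)"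
proof -
  have "(\<Sum>j\<in>J. coeff (elem_sym_sq_line_poly (Suc c) x (d j)) 2) =
      (\<Sum>A | card A = Suc c. \<Sum>i\<in>A. \<Prod>l\<in>A - {i}. x l ^ 2)"
    unfolding elem_sym_sq_line_poly_def coeff_sum
    by (subst sum.swap) (simp add: sum_coeff_2_prod_sq_line_poly_orthonormal[OF _ assms])
  also have "\<dots> = (\<Sum>B | card B = c. \<Sum>i\<in>-B. \<Prod>l\<in>B. x l ^ 2)"
    by (rule sum_card_compl_eq_sum_card_Suc[symmetric])
  also have "\<dots> = (\<Sum>B | card B = c. (real CARD('a) - real c) * (\<Prod>l\<in>B. x l ^ 2))"
  proof (rule sum.cong)
    fix B :: "'a set" assume "B \<in> {B. card B = c}"
    then have "real (card (-B)) = real CARD('a) - real c"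
      using card_mono[of UNIV B]
      by (simp add: Compl_eq_Diff_UNIV card_Diff_subset of_nat_diff)
    then show "(\<Sum>i\<in>-B. \<Prod>l\<in>B. x l ^ 2) = (real CARD('a) - real c) * (\<Prod>l\<in>B. x l ^ 2)"
      by simp
  qed simp
  also have "\<dots> = (real CARD('a) - real c) * elem_sym c (\<lambda>i. x i ^ 2)"
    by (simp add: elem_sym_def sum_distrib_left)
  finally show ?thesis .
qed

lemma coeff_quadratic_power:
  fixes s :: real
  shows "coeff ([:1, 2 * s, 1:] ^ m) 0 = 1"
    and "coeff ([:1, 2 * s, 1:] ^ m) 1 = 2 * real m * s"
    and "coeff ([:1, 2 * s, 1:] ^ m) 2 = real m + 2 * real m * (real m - 1) * s ^ 2"
proof (induction m)
  case (Suc m)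
  show "coeff ([:1, 2 * s, 1:] ^ Suc m) 0 = 1"
    using Suc.IH(1) by (simp add: coeff_mult_0)
  show "coeff ([:1, 2 * s, 1:] ^ Suc m) 1 = 2 * real (Suc m) * s"
    unfolding power_Suc coeff_mult_1_2 using Suc.IH(1,2) by (simp add: algebra_simps)
  show "coeff ([:1, 2 * s, 1:] ^ Suc m) 2 = real (Suc m) + 2 * real (Suc m) * (real (Suc m) - 1) * s ^ 2"
    unfolding power_Suc coeff_mult_1_2 using Suc.IH
    by (simp add: numeral_2_eq_2 power2_eq_square algebra_simps)
qed simp_all

lemma sum_coeff_2_quadratic_power_unit:
  fixes s :: "'j::finite \<Rightarrow> real"
  assumes "(\<Sum>j\<in>UNIV. s j ^ 2) = 1"
  shows "(\<Sum>j\<in>UNIV. coeff ([:1, 2 * s j, 1:] ^ Suc c) 2) = real (Suc c) * (real CARD('j) + 2 * real c)"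
  unfolding coeff_quadratic_power(3) using assms
  by (simp add: sum.distrib algebra_simps flip: sum_distrib_left)

section \<open>Moments under the Haar measure\<close>

lemma elem_sym_nonneg: "(\<And>i. 0 \<le> f i) \<Longrightarrow> 0 \<le> elem_sym b f"
  unfolding elem_sym_def by (intro sum_nonneg prod_nonneg) auto

lemma elem_sym_mono:
  assumes "\<And>i. 0 \<le> f i" "\<And>i. f i \<le> g i"
  shows "elem_sym b f \<le> elem_sym b g"
  unfolding elem_sym_def using assms by (intro sum_mono prod_mono) auto

lemma elem_sym_scale_sq: "elem_sym b (\<lambda>i. (s * f i) ^ 2) = s ^ (2 * b) * elem_sym b (\<lambda>i. f i ^ 2)"
  unfolding elem_sym_def
  by (simp add: sum_distrib_left power_mult_distrib prod.distrib power_mult)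

lemma norm_vector_matrix_mult_orthogonal:
  fixes Q :: "real^'n^'n"
  assumes "orthogonal_matrix Q"
  shows "norm (x v* Q) = norm x"
proof -
  have "orthogonal_transformation (\<lambda>x. transpose Q *v x)"
    unfolding orthogonal_transformation_matrix matrix_of_matrix_vector_mul
    using assms by (simp only: orthogonal_matrix_transpose matrix_vector_mul_linear)
  then have "norm (transpose Q *v x) = norm x"
    by (rule orthogonal_transformation_norm)
  then show ?thesis
    by simp
qed

lemma borel_measurable_matrix_entry [measurable]:
  "(\<lambda>Q::real^'n^'m. Q $ k $ i) \<in> borel_measurable borel"
  by (intro borel_measurable_continuous_onI continuous_on_component continuous_on_id)

lemma borel_measurable_elem_sym_sq:
  "(\<lambda>Q::real^'n^'n. elem_sym b (\<lambda>i. ((x v* Q) $ i) ^ 2)) \<in> borel_measurable borel"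
  unfolding elem_sym_def vector_matrix_mult_def vec_lambda_beta by measurable

lemma orthogonal_matrix_columns_orthonormal:
  fixes Q :: "real^'n^'n"
  assumes "orthogonal_matrix Q"
  shows "(\<Sum>j\<in>UNIV. Q $ j $ i * Q $ j $ l) = (if i = l then 1 else 0)"
proof -
  have "(transpose Q ** Q) $ i $ l = mat 1 $ i $ l"
    using assms by (simp add: orthogonal_matrix_def)
  then show ?thesis
    by (simp add: matrix_matrix_mult_def transpose_def mat_def)
qed

lemma axis_vector_matrix_mult:
  fixes Q :: "real^'m^'n"
  shows "(axis j 1 v* Q) $ i = Q $ j $ i"
  using matrix_vector_mult_basis[of "transpose Q" j] unfolding transpose_matrix_vector
  by (simp add: column_def transpose_def)

lemma norm_unit_add_axis_power2:
  fixes u :: "real^'n"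
  assumes "norm u = 1"
  shows "norm (u + t *\<^sub>R axis j 1) ^ 2 = 1 + 2 * t * u $ j + t ^ 2"
  using assms unfolding power2_norm_eq_inner
  by (simp add: norm_eq_1 inner_add_left inner_add_right inner_axis inner_axis' inner_axis_axis inner_commute
      power2_eq_square algebra_simps)

lemma sum_power2_component_unit:
  fixes u :: "real^'n"
  assumes "norm u = 1"
  shows "(\<Sum>j\<in>UNIV. u $ j ^ 2) = 1"
  using assms unfolding norm_vec_def L2_set_def by (simp add: real_norm_def)

locale orthogonal_haar = prob_space \<mu> for \<mu> :: "(real^'n::finite^'n) measure" +
  assumes sets_eq_borel: "sets \<mu> = sets borel"
    and AE_orthogonal_matrix: "AE Q in \<mu>. orthogonal_matrix Q"
    and distr_left_mult: "\<And>U. orthogonal_matrix U \<Longrightarrow> distr \<mu> borel (\<lambda>Q. U ** Q) = \<mu>"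

lemma haar_orthogonal_iff_orthogonal_haar: "haar_orthogonal \<mu> \<longleftrightarrow> orthogonal_haar \<mu>"
  by (auto simp: haar_orthogonal_def orthogonal_haar_def orthogonal_haar_axioms_def)

context orthogonal_haar
begin

definition moment :: "nat \<Rightarrow> real^'n \<Rightarrow> real" where
  "moment b x = expectation (\<lambda>Q. elem_sym b (\<lambda>i. ((x v* Q) $ i) ^ 2))"

lemma borel_measurable_iff_borel: "f \<in> borel_measurable \<mu> \<longleftrightarrow> f \<in> borel_measurable borel"
  using measurable_cong_sets[OF sets_eq_borel refl] by blast

lemma integrable_elem_sym_sq: "integrable \<mu> (\<lambda>Q. elem_sym b (\<lambda>i. ((x v* Q) $ i) ^ 2))"
proof (rule integrable_const_bound)
  show "AE Q in \<mu>. norm (elem_sym b (\<lambda>i. ((x v* Q) $ i) ^ 2)) \<le> elem_sym b (\<lambda>_::'n. norm x ^ 2)"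
    using AE_orthogonal_matrix
  proof eventually_elim
    case (elim Q)
    have "\<bar>(x v* Q) $ i\<bar> \<le> norm x" for i
      using component_le_norm_cart[of "x v* Q" i] norm_vector_matrix_mult_orthogonal[OF elim] by simp
    then have sq_bound: "((x v* Q) $ i) ^ 2 \<le> norm x ^ 2" for i
      by (metis abs_ge_zero power2_abs power_mono)
    have "elem_sym b (\<lambda>i. ((x v* Q) $ i) ^ 2) \<le> elem_sym b (\<lambda>_::'n. norm x ^ 2)"
      by (rule elem_sym_mono) (simp_all add: sq_bound)
    moreover have "0 \<le> elem_sym b (\<lambda>i. ((x v* Q) $ i) ^ 2)"
      by (rule elem_sym_nonneg) simp
    ultimately show ?case
      by simp
  qed
qed (simp add: borel_measurable_iff_borel borel_measurable_elem_sym_sq)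

lemma moment_0 [simp]: "moment 0 x = 1"
  by (simp add: moment_def prob_space)

lemma moment_scaleR: "moment b (s *\<^sub>R x) = s ^ (2 * b) * moment b x"
  by (simp add: moment_def scaleR_vector_matrix_assoc elem_sym_scale_sq)

lemma moment_vector_matrix_mult_orthogonal:
  assumes "orthogonal_matrix U"
  shows "moment b (x v* U) = moment b x"
proof -
  have "(\<lambda>Q::real^'n^'n. U ** Q) \<in> borel_measurable borel"
    by (intro borel_measurable_continuous_onI)
      (simp add: matrix_matrix_mult_def, intro continuous_intros)
  then have "(\<lambda>Q. U ** Q) \<in> measurable \<mu> borel"
    using measurable_cong_sets[OF sets_eq_borel refl] by blast
  then have "moment b x = (\<integral>Q. elem_sym b (\<lambda>i. ((x v* (U ** Q)) $ i) ^ 2) \<partial>\<mu>)"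
    unfolding moment_def
    by (subst distr_left_mult[OF assms, symmetric]) (rule integral_distr[OF _ borel_measurable_elem_sym_sq])
  then show ?thesis
    by (simp add: moment_def vector_matrix_mul_assoc)
qed

lemma moment_eq_if_norm_eq:
  assumes "norm x = norm y"
  shows "moment b x = moment b y"
proof -
  obtain f where f: "orthogonal_transformation f" "f x = y"
    using orthogonal_transformation_exists[OF assms] by blast
  have "orthogonal_matrix (transpose (matrix f))"
    using f(1) by (simp add: orthogonal_transformation_matrix)
  then have "moment b (x v* transpose (matrix f)) = moment b x"
    by (rule moment_vector_matrix_mult_orthogonal)
  moreover have "x v* transpose (matrix f) = y"
    using f by (simp add: orthogonal_transformation matrix_works)
  ultimately show ?thesis
    by simp
qed

lemma moment_eq_norm_power_mult:
  assumes "norm u = 1"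
  shows "moment b x = norm x ^ (2 * b) * moment b u"
proof -
  have "moment b x = moment b (norm x *\<^sub>R u)"
    using assms by (intro moment_eq_if_norm_eq) simp
  then show ?thesis
    by (simp add: moment_scaleR)
qed

lemma moment_line_axis:
  assumes u: "norm u = 1"
  shows "moment b (u + t *\<^sub>R axis j 1) = poly (smult (moment b u) ([:1, 2 * u $ j, 1:] ^ b)) t"
proof -
  have "moment b (u + t *\<^sub>R axis j 1) = (1 + 2 * t * u $ j + t ^ 2) ^ b * moment b u"
    unfolding moment_eq_norm_power_mult[OF u, of b "u + t *\<^sub>R axis j 1"] power_mult
      norm_unit_add_axis_power2[OF u] ..
  then show ?thesis
    by (simp add: poly_power power2_eq_square algebra_simps)
qed

lemma has_bochner_integral_coeff_2_line_axis:
  assumes u: "norm u = 1"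
  shows "has_bochner_integral \<mu> (\<lambda>Q. coeff (elem_sym_sq_line_poly b (\<lambda>i. (u v* Q) $ i) (\<lambda>i. Q $ j $ i)) 2)
    (moment b u * coeff ([:1, 2 * u $ j, 1:] ^ b) 2)"
proof -
  have poly_line: "poly (elem_sym_sq_line_poly b (\<lambda>i. (u v* Q) $ i) (\<lambda>i. Q $ j $ i)) t =
      elem_sym b (\<lambda>i. (((u + t *\<^sub>R axis j 1) v* Q) $ i) ^ 2)" for Q t
    by (simp add: poly_elem_sym_sq_line_poly vector_matrix_left_distrib scaleR_vector_matrix_assoc
        axis_vector_matrix_mult)
  have degree: "degree (smult (moment b u) ([:1, 2 * u $ j, 1:] ^ b)) \<le> 2 * b"
    by (rule order.trans[OF degree_smult_le order.trans[OF degree_power_le]]) simp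
  have "has_bochner_integral \<mu> (\<lambda>Q. poly (elem_sym_sq_line_poly b (\<lambda>i. (u v* Q) $ i) (\<lambda>i. Q $ j $ i)) t)
      (poly (smult (moment b u) ([:1, 2 * u $ j, 1:] ^ b)) t)" for t
  proof -
    have "has_bochner_integral \<mu> (\<lambda>Q. elem_sym b (\<lambda>i. (((u + t *\<^sub>R axis j 1) v* Q) $ i) ^ 2))
        (moment b (u + t *\<^sub>R axis j 1))"
      unfolding moment_def by (rule has_bochner_integral_integrable[OF integrable_elem_sym_sq])
    then show ?thesis
      by (simp only: moment_line_axis[OF u] poly_line)
  qed
  from has_bochner_integral_coeff[OF degree_elem_sym_sq_line_poly degree this]
  show ?thesis
    by simp
qed

lemma moment_Suc:
  assumes u: "norm u = 1"
  shows "real (Suc c) * (real CARD('n) + 2 * real c) * moment (Suc c) u =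
    (real CARD('n) - real c) * moment c u"
proof -
  define F where "F Q = (\<Sum>j\<in>UNIV. coeff (elem_sym_sq_line_poly (Suc c) (\<lambda>i. (u v* Q) $ i) (\<lambda>i. Q $ j $ i)) 2)"
    for Q :: "real^'n^'n"
  have "has_bochner_integral \<mu> F (\<Sum>j\<in>UNIV. moment (Suc c) u * coeff ([:1, 2 * u $ j, 1:] ^ Suc c) 2)"
    unfolding F_def by (intro has_bochner_integral_sum has_bochner_integral_coeff_2_line_axis[OF u])
  also have "(\<Sum>j\<in>UNIV. moment (Suc c) u * coeff ([:1, 2 * u $ j, 1:] ^ Suc c) 2) =
      real (Suc c) * (real CARD('n) + 2 * real c) * moment (Suc c) u"
    using sum_coeff_2_quadratic_power_unit[OF sum_power2_component_unit[OF u], of c]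
    by (simp flip: sum_distrib_left)
  finally have lhs: "has_bochner_integral \<mu> F (real (Suc c) * (real CARD('n) + 2 * real c) * moment (Suc c) u)" .
  have "AE Q in \<mu>. F Q = (real CARD('n) - real c) * elem_sym c (\<lambda>i. ((u v* Q) $ i) ^ 2)"
    using AE_orthogonal_matrix
    by eventually_elim
      (simp add: F_def sum_coeff_2_elem_sym_sq_line_poly_orthonormal orthogonal_matrix_columns_orthonormal)
  moreover have "has_bochner_integral \<mu> (\<lambda>Q. (real CARD('n) - real c) * elem_sym c (\<lambda>i. ((u v* Q) $ i) ^ 2))
      ((real CARD('n) - real c) * moment c u)"
    unfolding moment_def
    by (intro has_bochner_integral_mult_right has_bochner_integral_integrable integrable_elem_sym_sq)
  ultimately have rhs: "has_bochner_integral \<mu> F ((real CARD('n) - real c) * moment c u)"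
    using borel_measurable_has_bochner_integral[OF lhs]
    by (subst has_bochner_integral_cong_AE)
      (auto simp: borel_measurable_iff_borel
        intro: borel_measurable_times[OF borel_measurable_const borel_measurable_elem_sym_sq])
  show ?thesis
    using has_bochner_integral_eq[OF lhs rhs] .
qed

lemma fact_mult_moment_unit:
  assumes u: "norm u = 1"
  shows "fact b * moment b u = (\<Prod>j<b. real CARD('n) - real j) / (\<Prod>j<b. real CARD('n) + 2 * real j)"
proof (induction b)
  case 0
  then show ?case by simp
next
  case (Suc c)
  have pos: "0 < real CARD('n) + 2 * real c"
    by (simp add: add_pos_nonneg)
  have "fact (Suc c) * moment (Suc c) u * (real CARD('n) + 2 * real c) =
      fact c * (real (Suc c) * (real CARD('n) + 2 * real c) * moment (Suc c) u)"
    by (simp add: algebra_simps)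
  also have "\<dots> = (real CARD('n) - real c) * (fact c * moment c u)"
    unfolding moment_Suc[OF u] by (simp add: algebra_simps)
  finally have "fact (Suc c) * moment (Suc c) u =
      (real CARD('n) - real c) * (fact c * moment c u) / (real CARD('n) + 2 * real c)"
    using pos by (simp add: eq_divide_eq)
  then show ?case
    by (simp add: Suc.IH)
qed

end

theorem proposition5p8:
  fixes v :: "real^'n" and \<mu> :: "(real^'n^'n) measure"
    and p a :: nat and E :: "(nat \<times> nat) list"
  assumes "haar_orthogonal \<mu>"
    and "p_regular_multigraph p a E"
  shows "free_cumulant \<mu> p a E (rank_one v) =
    (\<Prod>j<length E. real CARD('n) - real j) / (\<Prod>j<length E. real CARD('n) + 2 * real j)
      * norm v ^ (2 * length E)"
proof -
  interpret orthogonal_haar \<mu>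
    using assms(1) by (simp add: haar_orthogonal_iff_orthogonal_haar)
  obtain u :: "real^'n" where u: "norm u = 1"
    using vector_choose_size[of 1] by auto
  have "free_cumulant \<mu> p a E (rank_one v) = fact (length E) * moment (length E) v"
    by (simp add: free_cumulant_def graph_moment_distinct_rank_one[OF assms(2)] moment_def)
  also have "\<dots> = norm v ^ (2 * length E) * (fact (length E) * moment (length E) u)"
    by (simp add: moment_eq_norm_power_mult[OF u, of _ v])
  finally show ?thesis
    by (simp add: fact_mult_moment_unit[OF u])
qed

end
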